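(* Let $N\ge1$, $q\in[1,\infty)$ and let $f\in L^\infty(\mathbb{R}^N)$ satisfy \[\limsup_{r\uparrow1}(1-r)^{1/q}\|f\|_{B^r_{\infty,q}(\mathbb{R}^N)}<\infty.\] Then $f\in C^{0,1}(\mathbb{R}^N)$. Moreover, there are constants $0<c\le C$ independent of $f$ such that \[c\,q^{-1/q}[f]_{C^{0,1}(\mathbb{R}^N)}\le \limsup_{r\uparrow1}(1-r)^{1/q}\|f\|_{B^r_{\infty,q}(\mathbb{R}^N)}\le C\,q^{-1/q}[f]_{C^{0,1}(\mathbb{R}^N)}.\]
   Context: For $r\in(0,1)$ and $q\in[1,\infty)$, $\|f\|_{B^r_{\infty,q}}:=\|f\|_{L^\infty}+\left(\int_{\mathbb{R}^N}\|f(\cdot+h)-f\|_{L^\infty}^q\frac{\mathrm{d}h}{|h|^{N+rq}}\right)^{1/q}$ (first-order differences). $C^{0,1}(\mathbb{R}^N)$ is the set of $f\in L^\infty$ with $[f]_{C^{0,1}}:=\sup_{h\ne0}|h|^{-1}\|f(\cdot+h)-f\|_{L^\infty}<\infty$. *)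

theory Defs
  imports "HOL-Analysis.Analysis" "HOL-Probability.Essential_Supremum"
begin

definition Linf_norm :: "('a::euclidean_space \<Rightarrow> real) \<Rightarrow> ereal" where
  "Linf_norm g = esssup lebesgue (\<lambda>x. ereal \<bar>g x\<bar>)"

definition in_Linf :: "('a::euclidean_space \<Rightarrow> real) \<Rightarrow> bool" where
  "in_Linf f \<longleftrightarrow> f \<in> borel_measurable lebesgue \<and> Linf_norm f < \<infinity>"

definition diff_norm :: "('a::euclidean_space \<Rightarrow> real) \<Rightarrow> 'a \<Rightarrow> ereal" where
  "diff_norm f h = Linf_norm (\<lambda>x. f (x + h) - f x)"

text \<open>Besov norm B^r_{infty,q} (with first-order differences), valued in [0,infinity].
  For f in L-infinity the difference norms are finite reals (<= 2 ||f||), so taking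
  real_of_ereal loses nothing.\<close>
definition besov_norm :: "real \<Rightarrow> real \<Rightarrow> ('a::euclidean_space \<Rightarrow> real) \<Rightarrow> ereal" where
  "besov_norm r q f =
     (let I = (\<integral>\<^sup>+ h. ennreal (real_of_ereal (diff_norm f h) powr q
                        / norm h powr (real DIM('a) + r * q)) \<partial>lborel)
      in Linf_norm f + (if I = \<infinity> then \<infinity> else ereal (enn2real I powr (1 / q))))"

definition lip_seminorm :: "('a::euclidean_space \<Rightarrow> real) \<Rightarrow> ereal" where
  "lip_seminorm f = (SUP h\<in>-{0}. diff_norm f h / ereal (norm h))"

definition in_C01 :: "('a::euclidean_space \<Rightarrow> real) \<Rightarrow> bool" where
  "in_C01 f \<longleftrightarrow> in_Linf f \<and> lip_seminorm f < \<infinity>"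

definition besov_limsup :: "real \<Rightarrow> ('a::euclidean_space \<Rightarrow> real) \<Rightarrow> ereal" where
  "besov_limsup q f = Limsup (at_left 1) (\<lambda>r. ereal ((1 - r) powr (1 / q)) * besov_norm r q f)"

end

theory Submission
  imports Defs
begin

text \<open>The difference norms \<open>\<omega>(h) = \<parallel>f(\<cdot> + h) - f\<parallel>\<^sub>\<infinity>\<close> form a subadditive function bounded by
  \<open>2\<parallel>f\<parallel>\<^sub>\<infinity>\<close>, and the Besov norm only sees \<open>\<omega>\<close>.

  Lower bound: for \<open>v \<noteq> 0\<close> and each dyadic scale \<open>w = v/2\<^sup>k\<close>, subadditivity forces
  \<open>\<omega> \<ge> |w| \<omega>(v)/(2|v|)\<close> on at least half of the ball \<open>B(w/2, |w|/8)\<close>; these balls are disjoint,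
  so the Besov integral is at least a multiple of \<open>(\<omega>(v)/|v|)\<^sup>q / (q(1 - r))\<close>. Multiplying by
  \<open>1 - r\<close> and letting \<open>r \<rightarrow> 1\<close> bounds \<open>\<omega>(v)/|v|\<close>, hence the Lipschitz seminorm, by the limsup.

  Upper bound: on dyadic shells, \<open>\<omega>(h) \<le> [f] |h|\<close> near the origin contributes at most
  \<open>C [f]\<^sup>q / (q(1 - r))\<close> and \<open>\<omega> \<le> 2\<parallel>f\<parallel>\<^sub>\<infinity>\<close> far out contributes a bounded amount, which disappears
  after multiplication by \<open>1 - r\<close>.\<close>

section \<open>Lebesgue measure and essential suprema\<close>

lemma AE_lborel_translate:
  fixes k :: "'a::euclidean_space"
  assumes P: "Measurable.pred borel P" and ae: "AE x in lborel. P x"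
  shows "AE x in lborel. P (x + k)"
proof -
  have "AE x in distr lborel borel ((+) k). P x"
    using ae by (simp only: lborel_distr_plus)
  then show ?thesis
    using P by (subst (asm) AE_distr_iff) (auto simp: add.commute)
qed

lemma emeasure_lborel_reflect:
  fixes k :: "'a::euclidean_space"
  assumes S: "S \<in> sets borel"
  shows "emeasure lborel {x. k - x \<in> S} = emeasure lborel S"
proof -
  have "lborel = density (distr lborel borel (\<lambda>x. k + (-1) *\<^sub>R x)) (\<lambda>_. \<bar>-1::real\<bar> ^ DIM('a))"
    by (rule lborel_affine) simp
  then have "distr lborel borel (\<lambda>x. k - x) = (lborel :: 'a measure)"
    by (simp add: density_1)
  then have "emeasure lborel S = emeasure (distr lborel borel (\<lambda>x. k - x)) S"
    by simp
  also have "\<dots> = emeasure lborel ((\<lambda>x. k - x) -` S \<inter> space lborel)"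
    using S by (subst emeasure_distr) auto
  finally show ?thesis by (simp add: vimage_def)
qed

lemma esssup_lebesgue_eq_lborel:
  fixes F :: "'a::euclidean_space \<Rightarrow> ereal"
  assumes "F \<in> borel_measurable borel"
  shows "esssup lebesgue F = esssup lborel F"
proof -
  have "ae_filter (lebesgue :: 'a measure) = ae_filter lborel"
    by (rule filter_eqI) (simp add: AE_completion_iff)
  moreover have "F \<in> borel_measurable lebesgue"
    using assms by (simp add: measurable_completion)
  ultimately show ?thesis
    using assms by (simp add: esssup_def)
qed

lemma esssup_lebesgue_abs_eq_lborel:
  fixes f g :: "'a::euclidean_space \<Rightarrow> real"
  assumes f: "f \<in> borel_measurable lebesgue" and g: "g \<in> borel_measurable borel"
    and ae: "AE x in lborel. f x = g x"
  shows "esssup lebesgue (\<lambda>x. ereal \<bar>f x\<bar>) = esssup lborel (\<lambda>x. ereal \<bar>g x\<bar>)"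
proof -
  have gE: "(\<lambda>x. ereal \<bar>g x\<bar>) \<in> borel_measurable borel"
    using g by measurable
  have fE: "(\<lambda>x. ereal \<bar>f x\<bar>) \<in> borel_measurable lebesgue"
    using f by measurable
  have "esssup lebesgue (\<lambda>x. ereal \<bar>f x\<bar>) = esssup lebesgue (\<lambda>x. ereal \<bar>g x\<bar>)"
    by (rule esssup_AE_cong[OF fE]) (use gE ae in \<open>auto simp: measurable_completion AE_completion_iff\<close>)
  also have "\<dots> = esssup lborel (\<lambda>x. ereal \<bar>g x\<bar>)"
    by (rule esssup_lebesgue_eq_lborel[OF gE])
  finally show ?thesis .
qed

section \<open>The \<open>L\<^sup>\<infinity>\<close> modulus of continuity\<close>

text \<open>The difference norm of a Borel representative with respect to \<open>lborel\<close>, where translations and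
  Tonelli's theorem are available.\<close>
definition Linf_modulus :: "('a::euclidean_space \<Rightarrow> real) \<Rightarrow> 'a \<Rightarrow> ereal" where
  "Linf_modulus g h = esssup lborel (\<lambda>x. ereal \<bar>g (x + h) - g x\<bar>)"

lemma diff_norm_eq_Linf_modulus:
  fixes f g :: "'a::euclidean_space \<Rightarrow> real"
  assumes f: "f \<in> borel_measurable lebesgue" and g: "g \<in> borel_measurable borel"
    and ae: "AE x in lborel. f x = g x"
  shows "diff_norm f h = Linf_modulus g h"
proof -
  obtain N where N: "N \<in> null_sets lborel" "\<And>x. x \<notin> N \<Longrightarrow> f x = g x"
    using ae by (auto simp: eventually_ae_filter)
  have "{x. x - (-h) \<in> N} \<in> null_sets lborel"
    using N(1) by (rule null_sets_translation)
  then have "AE x in lborel. x \<notin> {x. x - (-h) \<in> N}"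
    by (rule AE_not_in)
  then have "AE x in lborel. x + h \<notin> N"
    by simp
  moreover have "AE x in lborel. x \<notin> N"
    using N(1) by (rule AE_not_in)
  ultimately have ae_diff: "AE x in lborel. f (x + h) - f x = g (x + h) - g x"
    using N(2) by auto
  have g_diff: "(\<lambda>x. g (x + h) - g x) \<in> borel_measurable borel"
    using g by measurable
  have "AE x in lebesgue. g (x + h) - g x = f (x + h) - f x"
    using ae_diff by (auto simp: AE_completion_iff)
  then have f_diff: "(\<lambda>x. f (x + h) - f x) \<in> borel_measurable lebesgue"
    by (rule borel_measurable_AE[rotated]) (use g_diff in \<open>simp add: measurable_completion\<close>)
  have "esssup lebesgue (\<lambda>x. ereal \<bar>f (x + h) - f x\<bar>)
      = esssup lborel (\<lambda>x. ereal \<bar>g (x + h) - g x\<bar>)"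
    by (rule esssup_lebesgue_abs_eq_lborel[where f="\<lambda>x. f (x + h) - f x", OF f_diff g_diff ae_diff])
  then show ?thesis
    by (simp add: diff_norm_def Linf_norm_def Linf_modulus_def)
qed

context
  fixes g :: "'a::euclidean_space \<Rightarrow> real"
  assumes g[measurable]: "g \<in> borel_measurable borel"
begin

lemma AE_le_Linf_modulus: "AE x in lborel. ereal \<bar>g (x + h) - g x\<bar> \<le> Linf_modulus g h"
  unfolding Linf_modulus_def by (rule esssup_AE)

lemma Linf_modulus_add_le: "Linf_modulus g (h + k) \<le> Linf_modulus g h + Linf_modulus g k"
proof -
  have "Measurable.pred borel (\<lambda>x. ereal \<bar>g (x + h) - g x\<bar> \<le> Linf_modulus g h)"
    by measurable
  from AE_lborel_translate[OF this AE_le_Linf_modulus]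
  have "AE x in lborel. ereal \<bar>g (x + k + h) - g (x + k)\<bar> \<le> Linf_modulus g h" .
  then have "AE x in lborel. ereal \<bar>g (x + (h + k)) - g x\<bar> \<le> Linf_modulus g h + Linf_modulus g k"
    using AE_le_Linf_modulus[of k]
  proof eventually_elim
    case (elim x)
    have "ereal \<bar>g (x + (h + k)) - g x\<bar>
        \<le> ereal \<bar>g (x + k + h) - g (x + k)\<bar> + ereal \<bar>g (x + k) - g x\<bar>"
      by (simp add: algebra_simps)
    also have "\<dots> \<le> Linf_modulus g h + Linf_modulus g k"
      using elim by (rule add_mono)
    finally show ?case .
  qed
  then show ?thesis
    unfolding Linf_modulus_def by (intro esssup_I) measurable
qed

lemma Linf_modulus_nonneg: "0 \<le> Linf_modulus g h"
proof -
  have "esssup lborel (\<lambda>x::'a. 0::ereal) \<le> Linf_modulus g h"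
    unfolding Linf_modulus_def by (rule esssup_mono) auto
  then show ?thesis
    by (simp add: esssup_const)
qed

lemma Linf_modulus_zero: "Linf_modulus g 0 = 0"
proof -
  have "Linf_modulus g 0 \<le> 0"
    unfolding Linf_modulus_def by (intro esssup_I) auto
  then show ?thesis
    using Linf_modulus_nonneg[of 0] by simp
qed

lemma Linf_modulus_le: "Linf_modulus g h \<le> 2 * esssup lborel (\<lambda>x. ereal \<bar>g x\<bar>)"
proof -
  let ?B = "esssup lborel (\<lambda>x. ereal \<bar>g x\<bar>)"
  have bound: "AE x in lborel. ereal \<bar>g x\<bar> \<le> ?B"
    by (rule esssup_AE)
  have "Measurable.pred borel (\<lambda>x. ereal \<bar>g x\<bar> \<le> ?B)"
    by measurable
  from AE_lborel_translate[where k=h, OF this bound]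
  have "AE x in lborel. ereal \<bar>g (x + h) - g x\<bar> \<le> 2 * ?B"
    using bound
  proof eventually_elim
    case (elim x)
    have "ereal \<bar>g (x + h) - g x\<bar> \<le> ereal \<bar>g (x + h)\<bar> + ereal \<bar>g x\<bar>"
      by simp
    also have "\<dots> \<le> ?B + ?B"
      using elim by (intro add_mono) auto
    finally show ?case
      by (cases ?B) auto
  qed
  then show ?thesis
    unfolding Linf_modulus_def by (intro esssup_I) measurable
qed

text \<open>Measurability in \<open>h\<close> comes from Tonelli: \<open>Linf_modulus g h > y\<close> iff the \<open>h\<close>-section of a
  jointly measurable set has positive measure.\<close>
lemma Linf_modulus_measurable: "Linf_modulus g \<in> borel_measurable borel"
proof (rule borel_measurableI_greater)
  fix y :: ereal
  define Q where "Q = {p \<in> space (lborel \<Otimes>\<^sub>M lborel). y < ereal \<bar>g (snd p + fst p) - g (snd p)\<bar>}"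
  have Q: "Q \<in> sets (lborel \<Otimes>\<^sub>M (lborel::'a measure))"
    unfolding Q_def by measurable
  have slice: "Pair h -` Q = {x \<in> space lborel. y < ereal \<bar>g (x + h) - g x\<bar>}" for h
    by (auto simp: Q_def space_pair_measure add.commute)
  have "y < Linf_modulus g h \<longleftrightarrow> 0 < emeasure lborel (Pair h -` Q)" for h
  proof
    assume "y < Linf_modulus g h"
    then show "0 < emeasure lborel (Pair h -` Q)"
      unfolding slice Linf_modulus_def by (intro esssup_pos_measure) measurable
  next
    assume pos: "0 < emeasure lborel (Pair h -` Q)"
    show "y < Linf_modulus g h"
    proof (rule ccontr)
      assume "\<not> y < Linf_modulus g h"
      then have "Pair h -` Q \<subseteq> {x \<in> space lborel. Linf_modulus g h < ereal \<bar>g (x + h) - g x\<bar>}"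
        by (auto simp: slice)
      then have "emeasure lborel (Pair h -` Q)
          \<le> emeasure lborel {x \<in> space lborel. Linf_modulus g h < ereal \<bar>g (x + h) - g x\<bar>}"
        by (intro emeasure_mono) measurable
      also have "\<dots> = 0"
        unfolding Linf_modulus_def by (rule esssup_zero_measure)
      finally show False
        using pos by simp
    qed
  qed
  then have eq: "{h \<in> space borel. y < Linf_modulus g h}
      = (\<lambda>h. emeasure lborel (Pair h -` Q)) -` {0<..} \<inter> space lborel"
    by auto
  have "(\<lambda>h. emeasure lborel (Pair h -` Q)) \<in> borel_measurable (lborel::'a measure)"
    by (rule lborel.measurable_emeasure_Pair[OF Q])
  then show "{h \<in> space borel. y < Linf_modulus g h} \<in> sets borel"
    unfolding eq by measurable
qed

end

lemma in_Linf_difference_modulus: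
  fixes f :: "'a::euclidean_space \<Rightarrow> real"
  assumes "in_Linf f"
  obtains \<omega> L where "\<omega> \<in> borel_measurable borel" "\<And>h. 0 \<le> \<omega> h"
    "\<And>h k. \<omega> (h + k) \<le> \<omega> h + \<omega> k" "\<omega> 0 = 0" "\<And>h. \<omega> h \<le> 2 * L" "0 \<le> L"
    "\<And>h. diff_norm f h = ereal (\<omega> h)" "Linf_norm f = ereal L"
proof -
  have f: "f \<in> borel_measurable lebesgue" and fin: "Linf_norm f < \<infinity>"
    using assms by (auto simp: in_Linf_def)
  obtain g where g[measurable]: "g \<in> borel_measurable borel" and ae: "AE x in lborel. f x = g x"
    using completion_ex_borel_measurable_real[OF f] by fastforce
  define B where "B = esssup lborel (\<lambda>x. ereal \<bar>g x\<bar>)"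
  have fB: "Linf_norm f = B"
    unfolding Linf_norm_def B_def by (rule esssup_lebesgue_abs_eq_lborel[OF f g ae])
  have "esssup lborel (\<lambda>x::'a. 0::ereal) \<le> B"
    unfolding B_def by (rule esssup_mono) auto
  then have "0 \<le> B"
    by (simp add: esssup_const)
  then obtain L where L: "B = ereal L" "0 \<le> L"
    using fin fB by (cases B) auto
  define \<omega> where "\<omega> h = real_of_ereal (Linf_modulus g h)" for h
  have W: "Linf_modulus g h = ereal (\<omega> h)" for h
    using Linf_modulus_nonneg[OF g, of h] Linf_modulus_le[OF g, of h] L
    unfolding \<omega>_def B_def by (cases "Linf_modulus g h") auto
  show thesis
  proof
    show "\<omega> \<in> borel_measurable borel"
      unfolding \<omega>_def using Linf_modulus_measurable[OF g] by measurable
    show "0 \<le> \<omega> h" for h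
      using Linf_modulus_nonneg[OF g, of h] W[of h] by simp
    show "\<omega> (h + k) \<le> \<omega> h + \<omega> k" for h k
      using Linf_modulus_add_le[OF g, of h k] W by simp
    show "\<omega> 0 = 0"
      using Linf_modulus_zero[OF g] W[of 0] by simp
    show "\<omega> h \<le> 2 * L" for h
      using Linf_modulus_le[OF g, of h] W[of h] L by (simp add: B_def)
    show "diff_norm f h = ereal (\<omega> h)" for h
      using diff_norm_eq_Linf_modulus[OF f g ae] W by simp
  qed (use fB L in simp_all)
qed

definition besov_integral :: "real \<Rightarrow> real \<Rightarrow> ('a::euclidean_space \<Rightarrow> real) \<Rightarrow> ennreal" where
  "besov_integral r q \<omega> = (\<integral>\<^sup>+h. ennreal (\<omega> h powr q / norm h powr (real DIM('a) + r * q)) \<partial>lborel)"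

lemma besov_norm_eq:
  assumes "\<And>h. diff_norm f h = ereal (\<omega> h)"
  shows "besov_norm r q f = Linf_norm f +
    (if besov_integral r q \<omega> = \<infinity> then \<infinity> else ereal (enn2real (besov_integral r q \<omega>) powr (1 / q)))"
  using assms by (simp add: besov_norm_def besov_integral_def)

context
  fixes f :: "'a::euclidean_space \<Rightarrow> real" and \<omega> :: "'a \<Rightarrow> real" and L r q :: real
  assumes diff_norm: "\<And>h. diff_norm f h = ereal (\<omega> h)"
    and Linf: "Linf_norm f = ereal L" and L: "0 \<le> L" and r: "r < 1" and q: "0 < q"
begin

lemma scaled_besov_norm_ge:
  assumes I: "ennreal T \<le> besov_integral r q \<omega>" and T: "0 \<le> T"
  shows "ereal (((1 - r) * T) powr (1 / q)) \<le> ereal ((1 - r) powr (1 / q)) * besov_norm r q f"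
proof (cases "besov_integral r q \<omega> = \<infinity>")
  case True
  then show ?thesis
    using r by (simp add: besov_norm_eq[OF diff_norm] Linf)
next
  case False
  then have "T \<le> enn2real (besov_integral r q \<omega>)"
    using enn2real_mono[OF I] T by (simp add: less_top)
  then have "T powr (1 / q) \<le> enn2real (besov_integral r q \<omega>) powr (1 / q)"
    using T q by (intro powr_mono2) auto
  then have "(1 - r) powr (1 / q) * T powr (1 / q)
      \<le> (1 - r) powr (1 / q) * (L + enn2real (besov_integral r q \<omega>) powr (1 / q))"
    using L by (intro mult_left_mono) auto
  then show ?thesis
    using False r T by (simp add: besov_norm_eq[OF diff_norm] Linf powr_mult)
qed

lemma scaled_besov_norm_le:
  assumes I: "besov_integral r q \<omega> \<le> ennreal U" and U: "0 \<le> U"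
  shows "ereal ((1 - r) powr (1 / q)) * besov_norm r q f
    \<le> ereal ((1 - r) powr (1 / q) * L + ((1 - r) * U) powr (1 / q))"
proof -
  have fin: "besov_integral r q \<omega> \<noteq> \<infinity>"
    using I by (auto simp: top_unique)
  have "enn2real (besov_integral r q \<omega>) \<le> U"
    using enn2real_mono[OF I] U by simp
  then have "enn2real (besov_integral r q \<omega>) powr (1 / q) \<le> U powr (1 / q)"
    using q by (intro powr_mono2) auto
  then have "(1 - r) powr (1 / q) * (L + enn2real (besov_integral r q \<omega>) powr (1 / q))
      \<le> (1 - r) powr (1 / q) * (L + U powr (1 / q))"
    by (intro mult_left_mono) auto
  moreover have "((1 - r) * U) powr (1 / q) = (1 - r) powr (1 / q) * U powr (1 / q)"
    using r U by (simp add: powr_mult)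
  ultimately show ?thesis
    using fin by (simp add: besov_norm_eq[OF diff_norm] Linf distrib_left)
qed

end

section \<open>Lower bound for subadditive moduli\<close>

lemma geometric_sum_powr_ge:
  fixes s :: real
  assumes s: "0 < s"
  shows "1 / (2 * s) \<le> (\<Sum>k<nat \<lceil>1 / s\<rceil>. (2 powr (- s)) ^ k)"
proof -
  let ?x = "2 powr (- s)" and ?n = "nat \<lceil>1 / s\<rceil>"
  have x1: "?x < 1"
    using s by (simp add: powr_minus_divide)
  have "?x = exp (- s * ln 2)"
    by (simp add: powr_def)
  also have "\<dots> \<ge> 1 - s * ln 2"
    using exp_ge_add_one_self[of "- s * ln 2"] by simp
  finally have "1 - ?x \<le> s * ln 2" by simp
  also have "\<dots> \<le> s"
    using s ln_2_less_1 by (simp add: mult_left_le)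
  finally have x_ge: "1 - ?x \<le> s" .
  have "1 / s \<le> real ?n"
    by linarith
  from mult_left_mono[OF this, of s] have "1 \<le> s * real ?n"
    using s by simp
  then have "2 powr (- (s * real ?n)) \<le> 2 powr (-1)"
    by (intro powr_mono) auto
  moreover have "?x ^ ?n = 2 powr (- (s * real ?n))"
    by (simp add: powr_realpow[symmetric] powr_powr)
  ultimately have "1 / 2 \<le> 1 - ?x ^ ?n"
    by simp
  then have "(1 / 2) / s \<le> (1 - ?x ^ ?n) / (1 - ?x)"
    using x1 s x_ge by (intro frac_le) auto
  also have "\<dots> = (\<Sum>k<?n. ?x ^ k)"
    using x1 by (simp add: sum_gp_strict)
  finally show ?thesis by simp
qed

lemma dist_half_scaleR_reflect:
  fixes w y :: "'a::real_normed_vector"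
  shows "dist ((1/2) *\<^sub>R w) (w - y) = dist ((1/2) *\<^sub>R w) y"
proof -
  have "(1/2) *\<^sub>R w - (w - y) = - ((1/2) *\<^sub>R w - y)"
    by (simp add: algebra_simps flip: scaleR_2)
  then show ?thesis
    by (simp only: dist_norm norm_minus_cancel)
qed

lemma sum_emeasure_le_nn_integral:
  fixes c :: "'i \<Rightarrow> ennreal" and F :: "'a \<Rightarrow> ennreal"
  assumes "finite K" and sets: "\<And>k. k \<in> K \<Longrightarrow> S k \<in> sets M"
    and disj: "disjoint_family_on S K"
    and le: "\<And>k h. k \<in> K \<Longrightarrow> h \<in> S k \<Longrightarrow> c k \<le> F h"
  shows "(\<Sum>k\<in>K. c k * emeasure M (S k)) \<le> (\<integral>\<^sup>+h. F h \<partial>M)"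
proof -
  have pointwise: "(\<Sum>k\<in>K. c k * indicator (S k) h) \<le> F h" for h
  proof (cases "\<exists>j\<in>K. h \<in> S j")
    case True
    then obtain j where j: "j \<in> K" "h \<in> S j" by blast
    have "(\<Sum>k\<in>K. c k * indicator (S k) h) = (\<Sum>k\<in>K. if k = j then c j else 0)"
      using j disj by (intro sum.cong) (auto simp: disjoint_family_on_def indicator_def)
    also have "\<dots> = c j"
      using j \<open>finite K\<close> by simp
    finally show ?thesis
      using le j by simp
  qed auto
  have "(\<Sum>k\<in>K. c k * emeasure M (S k)) = (\<Sum>k\<in>K. \<integral>\<^sup>+h. c k * indicator (S k) h \<partial>M)"
    using sets by (intro sum.cong) (auto simp: nn_integral_cmult_indicator)
  also have "\<dots> = (\<integral>\<^sup>+h. (\<Sum>k\<in>K. c k * indicator (S k) h) \<partial>M)"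
    using sets by (intro nn_integral_sum[symmetric]) auto
  also have "\<dots> \<le> (\<integral>\<^sup>+h. F h \<partial>M)"
    by (intro nn_integral_mono pointwise)
  finally show ?thesis .
qed

lemma block_contribution_eq:
  fixes a \<rho> r q V :: real and n :: nat
  assumes "0 < \<rho>" "0 \<le> a"
  shows "(a * \<rho> / 2) powr q / \<rho> powr (real n + r * q) * (V * (\<rho> / 8) ^ n / 2)
       = V / 8 ^ n / 2 * (a / 2) powr q * \<rho> powr (q * (1 - r))"
proof -
  have "\<rho> powr (q * (1 - r)) = \<rho> powr q * \<rho> powr (real n) / \<rho> powr (real n + r * q)"
    by (simp add: powr_diff[symmetric] powr_add[symmetric] algebra_simps)
  moreover have "(a * \<rho> / 2) powr q = (a / 2) powr q * \<rho> powr q"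
    using assms by (simp add: powr_mult[symmetric])
  moreover have "(\<rho> / 8) ^ n = \<rho> powr (real n) / 8 ^ n"
    using assms by (simp add: power_divide powr_realpow)
  ultimately show ?thesis
    by (simp add: field_simps)
qed

context
  fixes \<omega> :: "'a::euclidean_space \<Rightarrow> real"
  assumes \<omega>_measurable[measurable]: "\<omega> \<in> borel_measurable borel"
    and \<omega>_add_le: "\<And>h k. \<omega> (h + k) \<le> \<omega> h + \<omega> k"
begin

lemma divide_pow2_le_modulus: "\<omega> v / 2 ^ k \<le> \<omega> (v /\<^sub>R 2 ^ k)"
proof (induction k)
  case (Suc k)
  let ?w = "v /\<^sub>R 2 ^ Suc k"
  have "\<omega> (v /\<^sub>R 2 ^ k) \<le> 2 * \<omega> ?w"
    using \<omega>_add_le[of ?w ?w] by (simp add: scaleR_2[symmetric])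
  have "\<omega> v \<le> 2 ^ k * \<omega> (v /\<^sub>R 2 ^ k)"
    using Suc by (simp add: field_simps)
  also have "\<dots> \<le> 2 ^ k * (2 * \<omega> ?w)"
    using \<open>\<omega> (v /\<^sub>R 2 ^ k) \<le> 2 * \<omega> ?w\<close> by (intro mult_left_mono) auto
  finally show ?case
    by (simp add: field_simps)
qed simp

definition dyadic_block :: "real \<Rightarrow> 'a \<Rightarrow> 'a set" where
  "dyadic_block a w = {y \<in> ball ((1/2) *\<^sub>R w) (norm w / 8). a * norm w / 2 \<le> \<omega> y}"

lemma dyadic_block_sets [measurable]: "dyadic_block a w \<in> sets borel"
  unfolding dyadic_block_def by measurable

lemma dyadic_block_norm:
  assumes "y \<in> dyadic_block a w"
  shows "3/8 * norm w < norm y" "norm y < 5/8 * norm w"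
proof -
  have d: "norm (y - (1/2) *\<^sub>R w) < norm w / 8"
    using assms by (simp add: dyadic_block_def dist_norm norm_minus_commute)
  have "norm ((1/2) *\<^sub>R w) \<le> norm y + norm (y - (1/2) *\<^sub>R w)"
    using norm_triangle_ineq4[of y "y - (1/2) *\<^sub>R w"] by simp
  then show "3/8 * norm w < norm y"
    using d by simp
  have "norm y \<le> norm ((1/2) *\<^sub>R w) + norm (y - (1/2) *\<^sub>R w)"
    using norm_triangle_ineq[of "(1/2) *\<^sub>R w" "y - (1/2) *\<^sub>R w"] by simp
  then show "norm y < 5/8 * norm w"
    using d by simp
qed

text \<open>Subadditivity gives \<open>\<omega> y \<ge> a|w|/2\<close> or \<open>\<omega> (w - y) \<ge> a|w|/2\<close>, and \<open>y \<mapsto> w - y\<close> preserves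
  both the ball and Lebesgue measure.\<close>
lemma emeasure_dyadic_block:
  assumes a: "a * norm w \<le> \<omega> w"
  shows "ennreal (unit_ball_vol (real DIM('a)) * (norm w / 8) ^ DIM('a) / 2)
    \<le> emeasure lborel (dyadic_block a w)"
proof -
  let ?B = "ball ((1/2) *\<^sub>R w) (norm w / 8)" and ?S = "dyadic_block a w"
  have "?B \<subseteq> ?S \<union> {y. w - y \<in> ?S}"
  proof
    fix y assume y: "y \<in> ?B"
    then have y': "w - y \<in> ?B"
      by (simp add: dist_half_scaleR_reflect)
    have "\<omega> w \<le> \<omega> y + \<omega> (w - y)"
      using \<omega>_add_le[of y "w - y"] by simp
    then show "y \<in> ?S \<union> {y. w - y \<in> ?S}"
      using a y y' by (auto simp: dyadic_block_def)
  qed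
  then have "emeasure lborel ?B \<le> emeasure lborel (?S \<union> {y. w - y \<in> ?S})"
    by (intro emeasure_mono) measurable
  also have "\<dots> \<le> emeasure lborel ?S + emeasure lborel {y. w - y \<in> ?S}"
    by (intro emeasure_subadditive) measurable
  also have "\<dots> = 2 * emeasure lborel ?S"
    by (simp add: emeasure_lborel_reflect mult_2)
  finally have "ennreal (unit_ball_vol (real DIM('a)) * (norm w / 8) ^ DIM('a)) \<le> 2 * emeasure lborel ?S"
    by (simp add: emeasure_ball)
  then have "ennreal (unit_ball_vol (real DIM('a)) * (norm w / 8) ^ DIM('a)) / 2
      \<le> emeasure lborel ?S * 2 / 2"
    by (simp add: divide_right_mono_ennreal mult.commute)
  then show ?thesis
    by (simp add: ennreal_divide_numeral ennreal_mult_divide_eq)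
qed

lemma dyadic_block_integrand_ge:
  assumes h: "h \<in> dyadic_block a w" and "0 \<le> a" "0 \<le> e" "0 \<le> q"
  shows "(a * norm w / 2) powr q / norm w powr e \<le> \<omega> h powr q / norm h powr e"
proof (rule frac_le)
  have "3/8 * norm w < norm h" "norm h < 5/8 * norm w"
    using dyadic_block_norm[OF h] by auto
  then show "0 < norm h powr e" "norm h powr e \<le> norm w powr e"
    using assms by (auto intro!: powr_mono2)
  show "(a * norm w / 2) powr q \<le> \<omega> h powr q"
    using h assms by (intro powr_mono2) (auto simp: dyadic_block_def)
qed simp

lemma disjoint_dyadic_blocks:
  assumes "v \<noteq> 0"
  shows "disjoint_family (\<lambda>k. dyadic_block a (v /\<^sub>R 2 ^ k))"
proof -
  have False if jk: "j < k" and hj: "h \<in> dyadic_block a (v /\<^sub>R 2 ^ j)"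
    and hk: "h \<in> dyadic_block a (v /\<^sub>R 2 ^ k)" for h j k
  proof -
    have "(2::real) ^ Suc j \<le> 2 ^ k"
      using jk by (intro power_increasing) auto
    then have "norm v / 2 ^ k \<le> norm v / 2 ^ Suc j"
      by (intro divide_left_mono) auto
    moreover have "0 < norm v / 2 ^ j"
      using assms by simp
    moreover have norm_scale: "norm (v /\<^sub>R 2 ^ i) = norm v / 2 ^ i" for i :: nat
      by (simp add: divide_inverse mult.commute)
    moreover have "3/8 * (norm v / 2 ^ j) < norm h" "norm h < 5/8 * (norm v / 2 ^ k)"
      using dyadic_block_norm(1)[OF hj] dyadic_block_norm(2)[OF hk] by (simp_all only: norm_scale)
    ultimately show False
      by simp
  qed
  then show ?thesis
    unfolding disjoint_family_on_def by (metis disjoint_iff linorder_neqE_nat)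
qed

text \<open>Summing the blocks at the \<open>1/s\<close> dyadic scales below \<open>v\<close> already produces the blow-up \<open>1/s\<close>
  as \<open>s = q (1 - r) \<rightarrow> 0\<close>.\<close>
lemma besov_integral_ge_subadditive:
  assumes v: "v \<noteq> 0" and a: "0 \<le> a" "a * norm v \<le> \<omega> v"
    and r: "0 \<le> r" "r < 1" and q: "0 < q"
  shows "ennreal (unit_ball_vol (real DIM('a)) / 8 ^ DIM('a) / 4 * (a / 2) powr q
      * norm v powr (q * (1 - r)) / (q * (1 - r))) \<le> besov_integral r q \<omega>"
proof -
  define N where "N = DIM('a)"
  define V where "V = unit_ball_vol (real N)"
  define s where "s = q * (1 - r)"
  define e where "e = real N + r * q"
  define \<rho> where "\<rho> k = norm v / 2 ^ k" for k :: nat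
  define w where "w k = v /\<^sub>R 2 ^ k" for k :: nat
  define c where "c k = (a * \<rho> k / 2) powr q / \<rho> k powr e" for k
  define n where "n = nat \<lceil>1 / s\<rceil>"
  define K where "K = V / 8 ^ N / 2 * (a / 2) powr q * norm v powr s"
  have s: "0 < s"
    using r q by (simp add: s_def)
  have \<rho>: "0 < \<rho> k" for k
    using v by (simp add: \<rho>_def)
  have norm_w: "norm (w k) = \<rho> k" for k
    by (simp add: w_def \<rho>_def divide_inverse mult.commute)
  have w_large: "a * norm (w k) \<le> \<omega> (w k)" for k
  proof -
    have "a * norm v / 2 ^ k \<le> \<omega> v / 2 ^ k"
      using a by (intro divide_right_mono) auto
    also have "\<dots> \<le> \<omega> (w k)"
      unfolding w_def by (rule divide_pow2_le_modulus)
    finally show ?thesis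
      by (simp add: norm_w \<rho>_def)
  qed
  have block_mass: "0 \<le> V * (\<rho> k / 8) ^ N / 2" for k
    using \<rho>[of k] by (simp add: V_def)
  have "c k * (V * (\<rho> k / 8) ^ N / 2) = K * (2 powr (- s)) ^ k" for k
  proof -
    have "((2::real) ^ k) powr s = 2 powr (real k * s)"
      by (simp add: powr_realpow[symmetric] powr_powr)
    moreover have "(2 powr (- s)) ^ k = 2 powr (real k * (- s))"
      by (simp add: powr_power)
    moreover have "\<rho> k powr s = norm v powr s / ((2::real) ^ k) powr s"
      unfolding \<rho>_def by (simp add: powr_divide)
    ultimately have "\<rho> k powr s = norm v powr s * (2 powr (- s)) ^ k"
      by (simp add: powr_minus divide_inverse)
    then show ?thesis
      using block_contribution_eq[OF \<rho> a(1), where r=r and q=q and V=V and n=N]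
      by (simp add: c_def e_def s_def K_def)
  qed
  then have "(\<Sum>k<n. c k * (V * (\<rho> k / 8) ^ N / 2)) = K * (\<Sum>k<n. (2 powr (- s)) ^ k)"
    by (simp add: sum_distrib_left)
  moreover have "K * (1 / (2 * s)) \<le> K * (\<Sum>k<n. (2 powr (- s)) ^ k)"
    unfolding n_def using geometric_sum_powr_ge[OF s] by (intro mult_left_mono) (simp_all add: K_def V_def)
  ultimately have "K / (2 * s) \<le> (\<Sum>k<n. c k * (V * (\<rho> k / 8) ^ N / 2))"
    by simp
  then have "ennreal (K / (2 * s)) \<le> ennreal (\<Sum>k<n. c k * (V * (\<rho> k / 8) ^ N / 2))"
    by (rule ennreal_leI)
  also have "\<dots> = (\<Sum>k<n. ennreal (c k * (V * (\<rho> k / 8) ^ N / 2)))"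
    using block_mass by (intro sum_ennreal[symmetric]) (simp add: c_def)
  also have "\<dots> = (\<Sum>k<n. ennreal (c k) * ennreal (V * (\<rho> k / 8) ^ N / 2))"
    using block_mass by (intro sum.cong refl ennreal_mult) (simp_all add: c_def)
  also have "\<dots> \<le> (\<Sum>k<n. ennreal (c k) * emeasure lborel (dyadic_block a (w k)))"
    using emeasure_dyadic_block[OF w_large]
    by (intro sum_mono mult_left_mono) (simp_all add: norm_w V_def N_def)
  also have "\<dots> \<le> besov_integral r q \<omega>"
    unfolding besov_integral_def
  proof (rule sum_emeasure_le_nn_integral)
    show "disjoint_family_on (\<lambda>k. dyadic_block a (w k)) {..<n}"
      using disjoint_family_on_mono[OF subset_UNIV disjoint_dyadic_blocks[OF v]] by (simp add: w_def)
    show "ennreal (c k) \<le> ennreal (\<omega> h powr q / norm h powr (real DIM('a) + r * q))"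
      if "h \<in> dyadic_block a (w k)" for k h
      using dyadic_block_integrand_ge[OF that a(1), of e q] r q
      by (intro ennreal_leI) (simp add: c_def norm_w e_def N_def)
  qed auto
  finally show ?thesis
    using s by (simp add: K_def V_def N_def s_def field_simps)
qed

end

section \<open>Upper bound for Lipschitz moduli\<close>

lemma dyadic_shell_below_one:
  fixes t :: real
  assumes "0 < t" "t < 1"
  shows "\<exists>k::nat. 2 powr (- real (Suc k)) \<le> t \<and> t < 2 powr (- real k)"
proof -
  have pow: "2 powr (- real n) = (1/2::real) ^ n" for n :: nat
    by (simp add: powr_minus powr_realpow power_one_over inverse_eq_divide)
  obtain n where "(1/2::real) ^ n < t"
    using real_arch_pow_inv[of t "1/2"] assms by auto
  moreover have "(1/2::real) ^ Suc n \<le> (1/2) ^ n"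
    by (rule power_decreasing) auto
  ultimately have ex: "\<exists>n. (1/2::real) ^ Suc n \<le> t"
    by (intro exI[of _ n]) linarith
  define k where "k = (LEAST n. (1/2::real) ^ Suc n \<le> t)"
  have "(1/2::real) ^ Suc k \<le> t"
    unfolding k_def by (rule LeastI_ex[OF ex])
  moreover have "t < (1/2) ^ k"
  proof (cases k)
    case (Suc m)
    then have "\<not> (1/2::real) ^ Suc m \<le> t"
      using not_less_Least[of m "\<lambda>n. (1/2::real) ^ Suc n \<le> t"] unfolding k_def by simp
    then show ?thesis
      using Suc by simp
  qed (use assms in simp)
  ultimately show ?thesis
    unfolding pow by blast
qed

lemma dyadic_shell_above_one:
  fixes t :: real
  assumes "1 \<le> t"
  shows "\<exists>k::nat. 2 powr (real k) \<le> t \<and> t < 2 powr (real (Suc k))"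
proof -
  obtain n where "t < (2::real) ^ n"
    using real_arch_pow[of 2 t] by auto
  moreover have "(2::real) ^ n \<le> 2 ^ Suc n"
    by (rule power_increasing) auto
  ultimately have ex: "\<exists>n. t < (2::real) ^ Suc n"
    by (intro exI[of _ n]) linarith
  define k where "k = (LEAST n. t < (2::real) ^ Suc n)"
  have "t < 2 ^ Suc k"
    unfolding k_def by (rule LeastI_ex[OF ex])
  moreover have "2 ^ k \<le> t"
  proof (cases k)
    case (Suc m)
    then have "\<not> t < (2::real) ^ Suc m"
      using not_less_Least[of m "\<lambda>n. t < (2::real) ^ Suc n"] unfolding k_def by simp
    then show ?thesis
      using Suc by simp
  qed (use assms in simp)
  ultimately show ?thesis
    by (simp only: powr_realpow) auto
qed

lemma inverse_one_minus_two_powr_le: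
  fixes s :: real
  assumes s: "0 < s" "s \<le> 1"
  shows "1 / (1 - 2 powr (- s)) \<le> 2 / (s * ln 2)"
proof -
  define t where "t = s * ln 2"
  have t: "0 < t" "t \<le> 1"
    using s ln_2_less_1 by (auto simp: t_def intro: mult_le_one)
  have "1 + t \<le> exp t"
    by (rule exp_ge_add_one_self)
  then have "exp (- t) \<le> 1 / (1 + t)"
    using t by (simp add: exp_minus field_simps)
  then have "t / (1 + t) \<le> 1 - exp (- t)"
    using t by (simp add: field_simps)
  moreover have "t / 2 \<le> t / (1 + t)"
    using t by (intro divide_left_mono) auto
  ultimately have "t / 2 \<le> 1 - exp (- t)"
    by linarith
  then have "1 / (1 - exp (- t)) \<le> 1 / (t / 2)"
    using t by (intro divide_left_mono) auto
  then show ?thesis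
    by (simp add: powr_def t_def)
qed

lemma nn_integral_le_geometric_shells:
  fixes F :: "'a \<Rightarrow> ennreal" and A B :: "nat \<Rightarrow> 'a set" and d e :: "nat \<Rightarrow> real"
  assumes sets: "\<And>k. A k \<in> sets M" "\<And>k. B k \<in> sets M"
    and cover: "\<And>h. F h \<noteq> 0 \<Longrightarrow>
      \<exists>k. (h \<in> A k \<and> F h \<le> ennreal (d k)) \<or> (h \<in> B k \<and> F h \<le> ennreal (e k))"
    and A: "\<And>k. ennreal (d k) * emeasure M (A k) \<le> ennreal (C1 * y1 ^ k)"
    and B: "\<And>k. ennreal (e k) * emeasure M (B k) \<le> ennreal (C2 * y2 ^ k)"
    and y: "0 \<le> y1" "y1 < 1" "0 \<le> y2" "y2 < 1" and C: "0 \<le> C1" "0 \<le> C2"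
  shows "(\<integral>\<^sup>+h. F h \<partial>M) \<le> ennreal (C1 / (1 - y1) + C2 / (1 - y2))"
proof -
  define G where "G k h = ennreal (d k) * indicator (A k) h + ennreal (e k) * indicator (B k) h" for k h
  have "F h \<le> (\<Sum>k. G k h)" for h
  proof (cases "F h = 0")
    case False
    then obtain k where "(h \<in> A k \<and> F h \<le> ennreal (d k)) \<or> (h \<in> B k \<and> F h \<le> ennreal (e k))"
      using cover by blast
    then have "F h \<le> G k h"
      by (auto simp: G_def intro: add_increasing add_increasing2)
    also have "G k h \<le> (\<Sum>k. G k h)"
      using sum_le_suminf[of "\<lambda>k. G k h" "{k}"] by simp
    finally show ?thesis .
  qed simp
  then have "(\<integral>\<^sup>+h. F h \<partial>M) \<le> (\<integral>\<^sup>+h. (\<Sum>k. G k h) \<partial>M)"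
    by (intro nn_integral_mono)
  also have "\<dots> = (\<Sum>k. \<integral>\<^sup>+h. G k h \<partial>M)"
    by (rule nn_integral_suminf) (use sets in \<open>simp add: G_def\<close>)
  also have "(\<lambda>k. \<integral>\<^sup>+h. G k h \<partial>M)
      = (\<lambda>k. ennreal (d k) * emeasure M (A k) + ennreal (e k) * emeasure M (B k))"
  proof
    fix k
    have "(\<integral>\<^sup>+h. G k h \<partial>M) = (\<integral>\<^sup>+h. ennreal (d k) * indicator (A k) h \<partial>M)
        + (\<integral>\<^sup>+h. ennreal (e k) * indicator (B k) h \<partial>M)"
      unfolding G_def by (rule nn_integral_add) (use sets in auto)
    then show "(\<integral>\<^sup>+h. G k h \<partial>M) = ennreal (d k) * emeasure M (A k) + ennreal (e k) * emeasure M (B k)"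
      using sets by (simp add: nn_integral_cmult_indicator)
  qed
  also have "(\<Sum>k. ennreal (d k) * emeasure M (A k) + ennreal (e k) * emeasure M (B k))
      \<le> (\<Sum>k. ennreal (C1 * y1 ^ k + C2 * y2 ^ k))"
  proof (rule suminf_le)
    fix k
    have "ennreal (d k) * emeasure M (A k) + ennreal (e k) * emeasure M (B k)
        \<le> ennreal (C1 * y1 ^ k) + ennreal (C2 * y2 ^ k)"
      by (intro add_mono A B)
    then show "ennreal (d k) * emeasure M (A k) + ennreal (e k) * emeasure M (B k)
        \<le> ennreal (C1 * y1 ^ k + C2 * y2 ^ k)"
      using y C by (simp add: ennreal_plus)
  qed auto
  also have "\<dots> = ennreal (\<Sum>k. C1 * y1 ^ k + C2 * y2 ^ k)"
    using y C by (intro suminf_ennreal2) (auto intro!: summable_add summable_mult summable_geometric)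
  also have "(\<Sum>k. C1 * y1 ^ k + C2 * y2 ^ k) = C1 / (1 - y1) + C2 / (1 - y2)"
  proof -
    have "summable (\<lambda>k. C1 * y1 ^ k)" "summable (\<lambda>k. C2 * y2 ^ k)"
      using y by (auto intro!: summable_mult summable_geometric)
    then have "(\<Sum>k. C1 * y1 ^ k + C2 * y2 ^ k) = (\<Sum>k. C1 * y1 ^ k) + (\<Sum>k. C2 * y2 ^ k)"
      by (rule suminf_add[symmetric])
    then show ?thesis
      using y by (simp add: suminf_mult suminf_geometric)
  qed
  finally show ?thesis .
qed

lemma emeasure_shell_weighted_le:
  fixes S :: "'a::euclidean_space set"
  assumes S: "S \<subseteq> ball 0 (2 powr t)" and c: "0 \<le> c"
  shows "ennreal (c / (2 powr b) powr p) * emeasure lborel S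
    \<le> ennreal (c * unit_ball_vol (real DIM('a)) * 2 powr (t * DIM('a) - b * p))"
proof -
  have "emeasure lborel S \<le> emeasure lborel (ball (0::'a) (2 powr t))"
    using S by (intro emeasure_mono) auto
  also have "\<dots> = ennreal (unit_ball_vol (real DIM('a)) * 2 powr (t * DIM('a)))"
    by (simp add: emeasure_ball powr_power mult.commute)
  finally have "ennreal (c / (2 powr b) powr p) * emeasure lborel S
      \<le> ennreal (c / (2 powr b) powr p) * ennreal (unit_ball_vol (real DIM('a)) * 2 powr (t * DIM('a)))"
    by (rule mult_left_mono) simp
  also have "\<dots> = ennreal (c * unit_ball_vol (real DIM('a)) * 2 powr (t * DIM('a) - b * p))"
    using c by (simp add: ennreal_mult[symmetric] powr_powr powr_diff field_simps)
  finally show ?thesis .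
qed

text \<open>Split \<open>\<real>\<^sup>N\<close> into the dyadic shells \<open>2^(-k-1) \<le> |h| < 2^(-k)\<close>, where the Lipschitz bound is used, and
  \<open>2^k \<le> |h| < 2^(k+1)\<close>, where the uniform bound is used; both give geometric series, the first
  with ratio \<open>2^(-q(1-r))\<close>.\<close>
lemma besov_integral_le_Lipschitz:
  fixes \<omega> :: "'a::euclidean_space \<Rightarrow> real"
  assumes nonneg: "\<And>h. 0 \<le> \<omega> h" and Lip: "\<And>h. \<omega> h \<le> K * norm h" and bounded: "\<And>h. \<omega> h \<le> M"
    and K: "0 \<le> K" and M: "0 \<le> M" and r: "1/2 \<le> r" "r < 1" and q: "1 \<le> q"
    and s1: "q * (1 - r) \<le> 1"
  shows "besov_integral r q \<omega>
    \<le> ennreal (K powr q * (unit_ball_vol (real DIM('a)) * 2 powr real DIM('a)) * (2 / (q * (1 - r) * ln 2))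
      + M powr q * (unit_ball_vol (real DIM('a)) * 2 powr real DIM('a)) / (1 - 2 powr (- 1/2)))"
proof -
  define N where "N = real DIM('a)"
  define V where "V = unit_ball_vol N"
  define s where "s = q * (1 - r)"
  have N1: "1 \<le> N"
    by (simp add: N_def DIM_positive Suc_le_eq)
  have s: "0 < s" "s \<le> 1"
    using r q s1 by (auto simp: s_def)
  have V: "0 \<le> V"
    using N1 by (simp add: V_def)
  define A where "A k = {h::'a. 2 powr (- real (Suc k)) \<le> norm h \<and> norm h < 2 powr (- real k)}" for k
  define B where "B k = {h::'a. 2 powr (real k) \<le> norm h \<and> norm h < 2 powr (real (Suc k))}" for k
  define d where "d k = K powr q / (2 powr (- real (Suc k))) powr (N - s)" for k
  define e where "e k = M powr q / (2 powr (real k)) powr (N + 1/2)" for k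
  define F where "F h = ennreal (\<omega> h powr q / norm h powr (N + r * q))" for h
  have exponent: "N + r * q = q + (N - s)"
    by (simp add: s_def algebra_simps)
  have cover: "\<exists>k. (h \<in> A k \<and> F h \<le> ennreal (d k)) \<or> (h \<in> B k \<and> F h \<le> ennreal (e k))"
    if "F h \<noteq> 0" for h
  proof -
    have h: "0 < norm h"
      using that by (auto simp: F_def)
    show ?thesis
    proof (cases "norm h < 1")
      case True
      then obtain k where k: "2 powr (- real (Suc k)) \<le> norm h" "norm h < 2 powr (- real k)"
        using dyadic_shell_below_one[OF h] by auto
      have "\<omega> h powr q / norm h powr (N + r * q) \<le> (K * norm h) powr q / norm h powr (N + r * q)"
        using nonneg Lip q h by (intro divide_right_mono powr_mono2) auto
      also have "\<dots> = K powr q / norm h powr (N - s)"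
        using h K by (simp add: exponent powr_add powr_mult)
      also have "\<dots> \<le> d k"
        unfolding d_def using k h s N1 K by (intro divide_left_mono powr_mono2 mult_pos_pos) auto
      finally show ?thesis
        using k by (auto simp: A_def F_def intro: ennreal_leI)
    next
      case False
      then obtain k where k: "2 powr (real k) \<le> norm h" "norm h < 2 powr (real (Suc k))"
        using dyadic_shell_above_one[of "norm h"] by auto
      have "1/2 \<le> r * q"
        using r q mult_left_mono[of 1 q r] by linarith
      then have "norm h powr (N + 1/2) \<le> norm h powr (N + r * q)"
        using False by (intro powr_mono) auto
      then have "\<omega> h powr q / norm h powr (N + r * q) \<le> M powr q / norm h powr (N + 1/2)"
        using nonneg bounded q h by (intro frac_le powr_mono2) auto
      also have "\<dots> \<le> e k"
        unfolding e_def using k h N1 M by (intro divide_left_mono powr_mono2 mult_pos_pos) auto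
      finally show ?thesis
        using k by (auto simp: B_def F_def intro: ennreal_leI)
    qed
  qed
  have shell_A: "ennreal (d k) * emeasure lborel (A k) \<le> ennreal (K powr q * V * 2 powr N * (2 powr (- s)) ^ k)"
    for k
  proof -
    have "A k \<subseteq> ball 0 (2 powr (- real k))"
      by (auto simp: A_def)
    then have "ennreal (d k) * emeasure lborel (A k)
        \<le> ennreal (K powr q * V * 2 powr (- real k * N - - real (Suc k) * (N - s)))"
      unfolding d_def V_def N_def by (rule emeasure_shell_weighted_le) simp
    also have "\<dots> \<le> ennreal (K powr q * V * 2 powr N * (2 powr (- s)) ^ k)"
    proof (intro ennreal_leI)
      have "2 powr (- real k * N - - real (Suc k) * (N - s)) \<le> 2 powr (N + real k * (- s))"
        using s by (intro powr_mono) (auto simp: algebra_simps)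
      also have "\<dots> = 2 powr N * (2 powr (- s)) ^ k"
        by (simp add: powr_power powr_add[symmetric])
      finally show "K powr q * V * 2 powr (- real k * N - - real (Suc k) * (N - s))
          \<le> K powr q * V * 2 powr N * (2 powr (- s)) ^ k"
        using mult_left_mono[of _ _ "K powr q * V"] V by (simp add: mult.assoc)
    qed
    finally show ?thesis .
  qed
  have shell_B: "ennreal (e k) * emeasure lborel (B k) \<le> ennreal (M powr q * V * 2 powr N * (2 powr (- 1/2)) ^ k)"
    for k
  proof -
    have "B k \<subseteq> ball 0 (2 powr (real (Suc k)))"
      by (auto simp: B_def)
    then have "ennreal (e k) * emeasure lborel (B k)
        \<le> ennreal (M powr q * V * 2 powr (real (Suc k) * N - real k * (N + 1/2)))"
      unfolding e_def V_def N_def by (rule emeasure_shell_weighted_le) simp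
    also have "2 powr (real (Suc k) * N - real k * (N + 1/2)) = 2 powr N * (2 powr (- 1/2)) ^ k"
      by (simp add: powr_power powr_add[symmetric] algebra_simps)
    finally show ?thesis
      by (simp add: mult.assoc)
  qed
  have "(\<integral>\<^sup>+h. F h \<partial>lborel)
      \<le> ennreal (K powr q * V * 2 powr N / (1 - 2 powr (- s)) + M powr q * V * 2 powr N / (1 - 2 powr (- 1/2)))"
    using s V K M
    by (intro nn_integral_le_geometric_shells[OF _ _ cover shell_A shell_B])
      (auto simp: A_def B_def powr_minus_divide)
  also have "\<dots> \<le> ennreal (K powr q * V * 2 powr N * (2 / (s * ln 2)) + M powr q * V * 2 powr N / (1 - 2 powr (- 1/2)))"
    using inverse_one_minus_two_powr_le[OF s] V
    by (intro ennreal_leI add_right_mono) (simp add: mult_left_mono divide_inverse)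
  finally show ?thesis
    by (simp add: besov_integral_def F_def N_def V_def s_def mult.assoc)
qed

section \<open>The limit \<open>r \<rightarrow> 1\<close>\<close>

lemma powr_add_le_twice:
  fixes a b p :: real
  assumes "0 \<le> a" "0 \<le> b" "0 < p" "p \<le> 1"
  shows "(a + b) powr p \<le> 2 * (a powr p + b powr p)"
proof -
  have "(a + b) powr p \<le> (2 * max a b) powr p"
    using assms by (intro powr_mono2) auto
  also have "\<dots> = 2 powr p * max a b powr p"
    using assms by (simp add: powr_mult)
  also have "\<dots> \<le> 2 * max a b powr p"
    using assms powr_mono[of p 1 2] by (intro mult_right_mono) auto
  also have "\<dots> \<le> 2 * (a powr p + b powr p)"
    by (simp add: max_def)
  finally show ?thesis .
qed

lemma min_one_le_powr_inverse:
  fixes x q :: real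
  assumes "0 < x" "1 \<le> q"
  shows "min x 1 \<le> x powr (1 / q)"
proof (cases "1 \<le> x")
  case True
  then show ?thesis
    using assms ge_one_powr_ge_zero[of x "1 / q"] by simp
next
  case False
  then have "x powr 1 \<le> x powr (1 / q)"
    using assms by (intro powr_mono') auto
  then show ?thesis
    using assms by simp
qed

lemma powr_inverse_le_max_one:
  fixes x q :: real
  assumes "0 \<le> x" "1 \<le> q"
  shows "x powr (1 / q) \<le> max x 1"
proof (cases "1 \<le> x")
  case True
  then have "x powr (1 / q) \<le> x powr 1"
    using assms by (intro powr_mono) auto
  then show ?thesis
    using True by simp
next
  case False
  then show ?thesis
    using assms powr_le1[of "1 / q" x] by simp
qed

lemma tendsto_one_minus_powr_at_left_one:
  assumes "0 < p"
  shows "((\<lambda>r. (1 - r) powr p) \<longlongrightarrow> 0) (at_left (1::real))"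
proof (rule tendsto_zero_powrI)
  show "((\<lambda>r. 1 - r) \<longlongrightarrow> 0) (at_left (1::real))"
    by (rule tendsto_eq_intros refl)+ (auto intro: tendsto_ident_at)
  have "eventually (\<lambda>r. r \<in> {0<..<1::real}) (at_left 1)"
    by (rule eventually_at_left_real) simp
  then show "\<forall>\<^sub>F r in at_left (1::real). 0 \<le> 1 - r"
    by (rule eventually_mono) auto
qed (use assms in auto)

definition besov_lower_const :: "nat \<Rightarrow> real" where
  "besov_lower_const n = min (unit_ball_vol (real n) / 8 ^ n / 4) 1 / 2"

definition besov_upper_const :: "nat \<Rightarrow> real" where
  "besov_upper_const n = 2 * max (unit_ball_vol (real n) * 2 powr real n * (2 / ln 2)) 1"

lemma besov_lower_const_pos: "0 < besov_lower_const n"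
  by (simp add: besov_lower_const_def)

lemma besov_lower_const_le_upper: "besov_lower_const n \<le> besov_upper_const n"
proof -
  have "besov_lower_const n \<le> 1 / 2"
    by (simp add: besov_lower_const_def)
  also have "\<dots> \<le> besov_upper_const n"
    by (simp add: besov_upper_const_def)
  finally show ?thesis .
qed

lemma lip_seminorm_eq_SUP:
  assumes "\<And>h. diff_norm f h = ereal (\<omega> h)"
  shows "lip_seminorm f = (SUP h\<in>-{0}. ereal (\<omega> h / norm h))"
  unfolding lip_seminorm_def assms by (intro SUP_cong refl) (auto simp: ereal_divide)

context
  fixes f \<omega> :: "'a::euclidean_space \<Rightarrow> real" and L q :: real
  assumes \<omega>_nonneg: "\<And>h. 0 \<le> \<omega> h"
    and diff_norm: "\<And>h. diff_norm f h = ereal (\<omega> h)"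
    and Linf: "Linf_norm f = ereal L" and L: "0 \<le> L" and q: "1 \<le> q"
begin

lemma besov_limsup_ge_difference_quotient:
  assumes \<omega>_measurable: "\<omega> \<in> borel_measurable borel"
    and \<omega>_add_le: "\<And>h k. \<omega> (h + k) \<le> \<omega> h + \<omega> k" and v: "v \<noteq> 0"
  shows "ereal (besov_lower_const DIM('a) * q powr (- 1 / q) * (\<omega> v / norm v)) \<le> besov_limsup q f"
proof -
  define E where "E = unit_ball_vol (real DIM('a)) / 8 ^ DIM('a) / 4"
  define a where "a = \<omega> v / norm v"
  define lb where "lb r = (E / q) powr (1 / q) * (a / 2) * norm v powr (1 - r)" for r
  have E: "0 < E" and q0: "0 < q" and nv: "0 < norm v"
    using q v by (simp_all add: E_def)
  have a: "0 \<le> a" "a * norm v \<le> \<omega> v"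
    using \<omega>_nonneg[of v] nv by (simp_all add: a_def)
  have "eventually (\<lambda>r. r \<in> {0<..<1::real}) (at_left 1)"
    by (rule eventually_at_left_real) simp
  then have ev: "eventually (\<lambda>r. ereal (lb r) \<le> ereal ((1 - r) powr (1 / q)) * besov_norm r q f) (at_left 1)"
  proof eventually_elim
    case (elim r)
    then have r: "0 < r" "r < 1" by auto
    define T where "T = E * (a / 2) powr q * norm v powr (q * (1 - r)) / (q * (1 - r))"
    have "ennreal T \<le> besov_integral r q \<omega>"
      unfolding T_def E_def
      using besov_integral_ge_subadditive[OF \<omega>_measurable \<omega>_add_le v a] r q0 by simp
    then have "ereal (((1 - r) * T) powr (1 / q)) \<le> ereal ((1 - r) powr (1 / q)) * besov_norm r q f"
      using E r q0 by (intro scaled_besov_norm_ge[OF diff_norm Linf L]) (simp_all add: T_def)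
    moreover have "(1 - r) * T = E / q * ((a / 2) powr q * norm v powr (q * (1 - r)))"
      unfolding T_def using r q0 by (simp add: field_simps)
    then have "((1 - r) * T) powr (1 / q)
        = (E / q) powr (1 / q) * (((a / 2) powr q) powr (1 / q) * (norm v powr (q * (1 - r))) powr (1 / q))"
      by (simp only: powr_mult)
    also have "\<dots> = lb r"
      using q0 a by (simp add: lb_def powr_powr)
    ultimately show ?case
      by simp
  qed
  have "(lb \<longlongrightarrow> (E / q) powr (1 / q) * (a / 2) * norm v powr (1 - 1)) (at_left 1)"
    unfolding lb_def using nv by (intro tendsto_intros) auto
  then have "(lb \<longlongrightarrow> (E / q) powr (1 / q) * (a / 2)) (at_left 1)"
    using v by simp
  then have "ereal ((E / q) powr (1 / q) * (a / 2)) = Liminf (at_left 1) (\<lambda>r. ereal (lb r))"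
    by (intro lim_imp_Liminf[symmetric]) auto
  also have "\<dots> \<le> Liminf (at_left 1) (\<lambda>r. ereal ((1 - r) powr (1 / q)) * besov_norm r q f)"
    by (rule Liminf_mono[OF ev])
  also have "\<dots> \<le> besov_limsup q f"
    unfolding besov_limsup_def by (rule Liminf_le_Limsup) simp
  finally have limsup: "ereal ((E / q) powr (1 / q) * (a / 2)) \<le> besov_limsup q f" .
  have "(E / q) powr (1 / q) = E powr (1 / q) * q powr (- 1 / q)"
    using E q0 by (simp add: powr_divide powr_minus_divide)
  then have "besov_lower_const DIM('a) * q powr (- 1 / q) \<le> (E / q) powr (1 / q) / 2"
    using min_one_le_powr_inverse[OF E q]
    unfolding besov_lower_const_def E_def[symmetric] by (simp add: mult_right_mono divide_right_mono)
  from mult_right_mono[OF this a(1)]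
  have "besov_lower_const DIM('a) * q powr (- 1 / q) * a \<le> (E / q) powr (1 / q) * (a / 2)"
    by simp
  then have "ereal (besov_lower_const DIM('a) * q powr (- 1 / q) * a)
      \<le> ereal ((E / q) powr (1 / q) * (a / 2))"
    by simp
  then show ?thesis
    using limsup unfolding a_def by (rule order_trans)
qed

lemma besov_limsup_ge_lip_seminorm:
  assumes "\<omega> \<in> borel_measurable borel" and "\<And>h k. \<omega> (h + k) \<le> \<omega> h + \<omega> k"
  shows "ereal (besov_lower_const DIM('a) * q powr (- 1 / q)) * lip_seminorm f \<le> besov_limsup q f"
proof -
  let ?c = "besov_lower_const DIM('a) * q powr (- 1 / q)"
  have "0 \<le> ?c"
    using besov_lower_const_pos[of "DIM('a)"] by simp
  then have "ereal ?c * lip_seminorm f = (SUP h\<in>-{0}. ereal ?c * ereal (\<omega> h / norm h))"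
    unfolding lip_seminorm_eq_SUP[OF diff_norm] by (intro SUP_ereal_mult_left[symmetric]) (auto simp: \<omega>_nonneg)
  also have "\<dots> \<le> besov_limsup q f"
    using besov_limsup_ge_difference_quotient[OF assms] by (intro SUP_least) (simp add: mult.assoc)
  finally show ?thesis .
qed

lemma scaled_besov_norm_le_Lipschitz:
  defines "X \<equiv> unit_ball_vol (real DIM('a)) * 2 powr real DIM('a) * (2 / ln 2)"
    and "Y \<equiv> unit_ball_vol (real DIM('a)) * 2 powr real DIM('a) / (1 - 2 powr (- 1/2))"
  assumes Lip: "\<And>h. \<omega> h \<le> K * norm h" and bounded: "\<And>h. \<omega> h \<le> 2 * L" and K: "0 \<le> K"
    and r: "1/2 \<le> r" "r < 1" "1 - 1 / q < r"
  shows "ereal ((1 - r) powr (1 / q)) * besov_norm r q f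
    \<le> ereal ((1 - r) powr (1 / q) * (L + 4 * L * Y powr (1 / q)) + 2 * K * (X / q) powr (1 / q))"
proof -
  define U where "U = K powr q * (unit_ball_vol (real DIM('a)) * 2 powr real DIM('a)) * (2 / (q * (1 - r) * ln 2))
    + (2 * L) powr q * (unit_ball_vol (real DIM('a)) * 2 powr real DIM('a)) / (1 - 2 powr (- 1/2))"
  have q0: "0 < q"
    using q by simp
  have X: "0 \<le> X"
    by (simp add: X_def ln_2_less_1)
  have "2 powr (- 1/2) < (1::real)"
    by (simp add: powr_minus_divide)
  then have Y: "0 \<le> Y"
    by (simp add: Y_def)
  have "1 - r < 1 / q"
    using r by simp
  then have "q * (1 - r) \<le> 1"
    using q0 by (simp add: field_simps)
  then have I: "besov_integral r q \<omega> \<le> ennreal U"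
    unfolding U_def using L
    by (intro besov_integral_le_Lipschitz[OF \<omega>_nonneg Lip bounded K _ r(1,2) q]) simp_all
  have alg: "(1 - r) * (P * W * (2 / (q * (1 - r) * l)) + Q * W / D) = P * (W * (2 / l)) / q + (1 - r) * (Q * (W / D))"
    if "0 < l" for P Q W D l :: real
    using r q0 that by (simp add: field_simps)
  then have U_eq: "(1 - r) * U = K powr q * X / q + (1 - r) * ((2 * L) powr q * Y)"
    unfolding U_def X_def Y_def by (intro alg) simp
  have "0 \<le> 2 / (q * (1 - r) * ln 2)"
    using r q0 by simp
  then have "0 \<le> U"
    unfolding U_def using \<open>2 powr (- 1/2) < 1\<close> r q0
    by (intro add_nonneg_nonneg mult_nonneg_nonneg divide_nonneg_nonneg) auto
  have "((1 - r) * U) powr (1 / q)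
      \<le> 2 * ((K powr q * X / q) powr (1 / q) + ((1 - r) * ((2 * L) powr q * Y)) powr (1 / q))"
    unfolding U_eq using X Y r q by (intro powr_add_le_twice) auto
  also have "(K powr q * X / q) powr (1 / q) = K * (X / q) powr (1 / q)"
    using K X q0 by (simp add: powr_mult powr_divide powr_powr)
  also have "((1 - r) * ((2 * L) powr q * Y)) powr (1 / q) = (1 - r) powr (1 / q) * (2 * L) * Y powr (1 / q)"
    using L Y r q0 by (simp add: powr_mult powr_powr)
  finally have "((1 - r) * U) powr (1 / q)
      \<le> 2 * (K * (X / q) powr (1 / q) + (1 - r) powr (1 / q) * (2 * L) * Y powr (1 / q))" .
  then have "ereal ((1 - r) powr (1 / q) * L + ((1 - r) * U) powr (1 / q))
      \<le> ereal ((1 - r) powr (1 / q) * (L + 4 * L * Y powr (1 / q)) + 2 * K * (X / q) powr (1 / q))"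
    by (simp add: algebra_simps)
  with scaled_besov_norm_le[OF diff_norm Linf L r(2) q0 I \<open>0 \<le> U\<close>] show ?thesis
    by (rule order_trans)
qed

lemma besov_limsup_le_lip_seminorm:
  assumes \<omega>_zero: "\<omega> 0 = 0" and bounded: "\<And>h. \<omega> h \<le> 2 * L" and fin: "lip_seminorm f < \<infinity>"
  shows "besov_limsup q f \<le> ereal (besov_upper_const DIM('a) * q powr (- 1 / q)) * lip_seminorm f"
proof -
  define X where "X = unit_ball_vol (real DIM('a)) * 2 powr real DIM('a) * (2 / ln 2)"
  define Y where "Y = unit_ball_vol (real DIM('a)) * 2 powr real DIM('a) / (1 - 2 powr (- 1/2))"
  have q0: "0 < q"
    using q by simp
  obtain v :: 'a where "v \<noteq> 0"
    using nonzero_Basis SOME_Basis by blast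
  then have "ereal (\<omega> v / norm v) \<le> lip_seminorm f"
    unfolding lip_seminorm_eq_SUP[OF diff_norm] by (intro SUP_upper) auto
  moreover have "0 \<le> \<omega> v / norm v"
    using \<omega>_nonneg[of v] by simp
  ultimately have "0 \<le> lip_seminorm f"
    by (metis ereal_less_eq(3) order_trans zero_ereal_def)
  then obtain K where lip: "lip_seminorm f = ereal K" and K: "0 \<le> K"
    using fin by (cases "lip_seminorm f") auto
  have Lip: "\<omega> h \<le> K * norm h" for h
  proof (cases "h = 0")
    case False
    then have "ereal (\<omega> h / norm h) \<le> lip_seminorm f"
      unfolding lip_seminorm_eq_SUP[OF diff_norm] by (intro SUP_upper) auto
    then show ?thesis
      using False lip by (simp add: divide_le_eq mult.commute)
  qed (simp add: \<omega>_zero)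
  define g where "g r = (1 - r) powr (1 / q) * (L + 4 * L * Y powr (1 / q)) + 2 * K * (X / q) powr (1 / q)"
    for r
  have "eventually (\<lambda>r. r \<in> {max (1/2) (1 - 1 / q) <..< 1::real}) (at_left 1)"
    by (rule eventually_at_left_real) (use q0 in simp)
  then have ev: "eventually (\<lambda>r. ereal ((1 - r) powr (1 / q)) * besov_norm r q f \<le> ereal (g r)) (at_left 1)"
  proof eventually_elim
    case (elim r)
    then show ?case
      unfolding g_def X_def Y_def by (intro scaled_besov_norm_le_Lipschitz[OF Lip bounded K]) auto
  qed
  have "(g \<longlongrightarrow> 0 * (L + 4 * L * Y powr (1 / q)) + 2 * K * (X / q) powr (1 / q)) (at_left 1)"
    unfolding g_def using q0 by (intro tendsto_intros tendsto_one_minus_powr_at_left_one) simp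
  then have "Limsup (at_left 1) (\<lambda>r. ereal (g r)) = ereal (2 * K * (X / q) powr (1 / q))"
    by (intro lim_imp_Limsup) auto
  then have "besov_limsup q f \<le> ereal (2 * K * (X / q) powr (1 / q))"
    unfolding besov_limsup_def using Limsup_mono[OF ev] by simp
  also have "2 * K * (X / q) powr (1 / q) \<le> besov_upper_const DIM('a) * q powr (- 1 / q) * K"
  proof -
    have X0: "0 \<le> X"
      by (simp add: X_def ln_2_less_1)
    have "(X / q) powr (1 / q) = X powr (1 / q) * q powr (- 1 / q)"
      using X0 q0 by (simp add: powr_divide powr_minus_divide)
    then have "(X / q) powr (1 / q) \<le> max X 1 * q powr (- 1 / q)"
      using powr_inverse_le_max_one[OF X0 q] by (simp add: mult_right_mono)
    then have "K * (X / q) powr (1 / q) \<le> K * (max X 1 * q powr (- 1 / q))"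
      using K by (rule mult_left_mono)
    then show ?thesis
      by (simp add: besov_upper_const_def X_def mult_ac)
  qed
  finally show ?thesis
    using lip by simp
qed

end

theorem theorem2p12:
  "\<exists>c C :: real. 0 < c \<and> c \<le> C \<and>
     (\<forall>q::real. \<forall>f :: 'a::euclidean_space \<Rightarrow> real.
        q \<ge> 1 \<longrightarrow> in_Linf f \<longrightarrow> besov_limsup q f < \<infinity> \<longrightarrow>
          in_C01 f \<and>
          ereal (c * q powr (- 1 / q)) * lip_seminorm f \<le> besov_limsup q f \<and>
          besov_limsup q f \<le> ereal (C * q powr (- 1 / q)) * lip_seminorm f)"
proof (intro exI conjI allI impI)
  let ?c = "besov_lower_const DIM('a)" and ?C = "besov_upper_const DIM('a)"
  show "0 < ?c" "?c \<le> ?C"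
    by (rule besov_lower_const_pos besov_lower_const_le_upper)+
  fix q :: real and f :: "'a \<Rightarrow> real"
  assume q: "1 \<le> q" and f: "in_Linf f" and fin: "besov_limsup q f < \<infinity>"
  obtain \<omega> L where \<omega>: "\<omega> \<in> borel_measurable borel" "\<And>h. 0 \<le> \<omega> h"
    "\<And>h k. \<omega> (h + k) \<le> \<omega> h + \<omega> k" "\<omega> 0 = 0" "\<And>h. \<omega> h \<le> 2 * L" "0 \<le> L"
    and diff_norm: "\<And>h. diff_norm f h = ereal (\<omega> h)" and Linf: "Linf_norm f = ereal L"
    using in_Linf_difference_modulus[OF f] by metis
  show lower: "ereal (?c * q powr (- 1 / q)) * lip_seminorm f \<le> besov_limsup q f"
    using besov_limsup_ge_lip_seminorm[OF \<omega>(2) diff_norm Linf \<omega>(6) q \<omega>(1,3)] .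
  have lip_fin: "lip_seminorm f < \<infinity>"
  proof (rule ccontr)
    assume "\<not> lip_seminorm f < \<infinity>"
    moreover have "0 < ?c * q powr (- 1 / q)"
      using besov_lower_const_pos[of "DIM('a)"] q by simp
    ultimately have "ereal (?c * q powr (- 1 / q)) * lip_seminorm f = \<infinity>"
      using besov_lower_const_pos[of "DIM('a)"] q by simp
    with lower have "\<infinity> \<le> besov_limsup q f"
      by (simp only:)
    then show False
      using fin by simp
  qed
  then show "in_C01 f"
    using f by (simp add: in_C01_def)
  show "besov_limsup q f \<le> ereal (?C * q powr (- 1 / q)) * lip_seminorm f"
    using besov_limsup_le_lip_seminorm[OF \<omega>(2) diff_norm Linf \<omega>(6) q \<omega>(4,5) lip_fin] .
qed

end
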